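(* There is an absolute constant $C$ such that the following holds. Let $s\ge2$ be an integer, $m\le s^{1/10}$ and $\delta=s^{-1/3}$. For any points $x_1,\dots,x_m\in\mathbb{R}^2$, with probability at least $1-Cs^{-1/10}$ over $\theta,a_1,\dots,a_{s-1},z$: (1) every pair $x_i,x_j$ with $|x_i-x_j|>\delta$ do not both belong to the same set $S_k$, for any $k\in\{1,\dots,s\}$; (2) every pair $x_i,x_j$ with $|x_i-x_j|\le\delta$ lie on the same side of the line $\{x:\langle x,\theta^\perp\rangle=z\}$.
   Context: $\theta$ is a uniformly random unit vector in $\mathbb{R}^2$ and $\theta^\perp$ its $90^\circ$ clockwise rotation; $a_1,\dots,a_{s-1}$ are independent uniform on $[-1,1]$, sorted increasingly, with $a_0=-1$, $a_s=1$; $z$ is uniform on $[-1,1]$; all independent. For $k=1,\dots,s$, $S_k=\{x\in\mathbb{R}^2:a_{k-1}<\langle x,\theta\rangle\le a_k\}$. *)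

theory Defs
  imports "HOL-Probability.Probability"
begin

text \<open>Sample point: (phi, (a, z)), theta = (cos phi, sin phi) with phi uniform on [0, 2pi);
  a : nat => real with a 1, ..., a (s-1) iid uniform on [-1,1]; z uniform on [-1,1].\<close>

definition sample_space :: "nat \<Rightarrow> (real \<times> (nat \<Rightarrow> real) \<times> real) measure" where
  "sample_space s =
     uniform_measure lborel {0..<2*pi}
     \<Otimes>\<^sub>M ((\<Pi>\<^sub>M i\<in>{1..<s}. uniform_measure lborel {-1..1})
     \<Otimes>\<^sub>M uniform_measure lborel {-1..1})"

definition theta :: "real \<Rightarrow> real \<times> real" where
  "theta phi = (cos phi, sin phi)"

definition theta_perp :: "real \<Rightarrow> real \<times> real" where
  "theta_perp phi = (sin phi, - cos phi)"

text \<open>sorted breakpoints a_0 = -1 < a_1 <= ... <= a_{s-1} < a_s = 1\<close>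
definition breakpt :: "nat \<Rightarrow> (nat \<Rightarrow> real) \<Rightarrow> nat \<Rightarrow> real" where
  "breakpt s a k = (if k = 0 then -1 else if k = s then 1
                    else sort (map a [1..<s]) ! (k - 1))"

definition strip :: "nat \<Rightarrow> real \<Rightarrow> (nat \<Rightarrow> real) \<Rightarrow> nat \<Rightarrow> (real \<times> real) set" where
  "strip s phi a k = {x. breakpt s a (k - 1) < x \<bullet> theta phi \<and> x \<bullet> theta phi \<le> breakpt s a k}"

definition good_event :: "nat \<Rightarrow> nat \<Rightarrow> (nat \<Rightarrow> real \<times> real) \<Rightarrow> real \<Rightarrow>
    (real \<times> (nat \<Rightarrow> real) \<times> real) \<Rightarrow> bool" where
  "good_event s m x \<delta> \<omega> = (case \<omega> of (phi, a, z) \<Rightarrow>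
     (\<forall>i\<in>{1..m}. \<forall>j\<in>{1..m}. i \<noteq> j \<longrightarrow> dist (x i) (x j) > \<delta> \<longrightarrow>
        (\<forall>k\<in>{1..s}. \<not> (x i \<in> strip s phi a k \<and> x j \<in> strip s phi a k))) \<and>
     (\<forall>i\<in>{1..m}. \<forall>j\<in>{1..m}. i \<noteq> j \<longrightarrow> dist (x i) (x j) \<le> \<delta> \<longrightarrow>
        ((x i \<bullet> theta_perp phi < z \<and> x j \<bullet> theta_perp phi < z) \<or>
         (x i \<bullet> theta_perp phi > z \<and> x j \<bullet> theta_perp phi > z))))"

end

theory Submission
  imports Defs
begin

text \<open>
  Fix a pair of points at distance \<open>d\<close> and write \<open>\<delta> = s\<^sup>-\<^sup>1\<^sup>/\<^sup>3\<close>.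
  If \<open>d \<le> \<delta>\<close>, the line \<open>\<langle>x, \<theta>\<^sup>\<bottom>\<rangle> = z\<close> separates them only when \<open>z\<close> falls between their
  projections onto \<open>\<theta>\<^sup>\<bottom>\<close>, which has probability at most \<open>d/2\<close>.
  If \<open>d > \<delta>\<close>, they share a strip only when either their projections onto \<open>\<theta>\<close> are closer
  than \<open>t = \<delta>\<^sup>2\<close>, which happens for a set of angles of measure \<open>O(t/d) = O(\<delta>)\<close>, or no
  breakpoint \<open>a\<^sub>l\<close> falls between the projections, which has probability
  \<open>(1 - t/2)\<^sup>s\<^sup>-\<^sup>1 \<le> 4/(s t) = 4\<delta>\<close>.
  Strip membership is decided by counting the breakpoints below a projection, which avoids
  order statistics. A union bound over the at most \<open>m\<^sup>2 \<le> s\<^sup>1\<^sup>/\<^sup>5\<close> pairs gives a failure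
  probability of at most \<open>7 s\<^sup>1\<^sup>/\<^sup>5 \<delta> \<le> 7 s\<^sup>-\<^sup>1\<^sup>/\<^sup>1\<^sup>0\<close>.
\<close>

section \<open>Strips via counting breakpoints\<close>

lemma sorted_nth_less_iff_length_filter:
  fixes xs :: "'a::linorder list"
  assumes "sorted xs" "j < length xs"
  shows "xs ! j < p \<longleftrightarrow> j < length (filter (\<lambda>y. y < p) xs)"
  using assms
proof (induction xs arbitrary: j)
  case Nil
  then show ?case by simp
next
  case (Cons x xs)
  show ?case
  proof (cases "x < p")
    case True
    then show ?thesis using Cons by (cases j) auto
  next
    case False
    with Cons.prems have "\<forall>y\<in>set (x # xs). \<not> y < p"
      by (auto dest: order.strict_trans2)
    with Cons.prems nth_mem[OF Cons.prems(2)] show ?thesis by (auto simp: filter_empty_conv)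
  qed
qed

definition count_below :: "nat \<Rightarrow> (nat \<Rightarrow> real) \<Rightarrow> real \<Rightarrow> nat" where
  "count_below s a p = card {l \<in> {1..<s}. a l < p}"

lemma count_below_le: "count_below s a p \<le> s - 1"
proof -
  have "count_below s a p \<le> card {1..<s}"
    unfolding count_below_def by (rule card_mono) auto
  then show ?thesis by simp
qed

lemma count_below_strict_mono:
  assumes "l \<in> {1..<s}" "p \<le> a l" "a l < q"
  shows "count_below s a p < count_below s a q"
  unfolding count_below_def
  by (rule psubset_card_mono) (use assms in \<open>auto dest: order.strict_trans2\<close>)

lemma real_count_below: "real (count_below s a p) = (\<Sum>l\<in>{1..<s}. if a l < p then 1 else 0)"
  by (simp add: count_below_def sum.If_cases Int_def)

lemma sort_nth_less_iff_count_below: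
  assumes "j < s - 1"
  shows "sort (map a [1..<s]) ! j < p \<longleftrightarrow> j < count_below s a p"
proof -
  have "length (filter (\<lambda>y. y < p) (sort (map a [1..<s]))) = length (filter (\<lambda>l. a l < p) [1..<s])"
    by (simp add: filter_sort filter_map o_def)
  also have "\<dots> = count_below s a p"
    unfolding count_below_def
    by (subst distinct_card[symmetric]) (auto intro!: arg_cong[where f=card])
  finally show ?thesis
    using assms by (subst sorted_nth_less_iff_length_filter) auto
qed

lemma mem_strip_iff:
  assumes "k \<in> {1..s}"
  shows "y \<in> strip s phi a k \<longleftrightarrow>
    count_below s a (y \<bullet> theta phi) = k - 1 \<and>
    (k = 1 \<longrightarrow> -1 < y \<bullet> theta phi) \<and> (k = s \<longrightarrow> y \<bullet> theta phi \<le> 1)"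
proof -
  define p where "p = y \<bullet> theta phi"
  have lower: "breakpt s a (k - 1) < p \<longleftrightarrow>
      (k = 1 \<longrightarrow> -1 < p) \<and> (k \<noteq> 1 \<longrightarrow> k - 2 < count_below s a p)"
    using assms sort_nth_less_iff_count_below[of "k - 2" s a p]
    by (auto simp: breakpt_def numeral_2_eq_2)
  have upper: "p \<le> breakpt s a k \<longleftrightarrow>
      (k = s \<longrightarrow> p \<le> 1) \<and> (k \<noteq> s \<longrightarrow> \<not> k - 1 < count_below s a p)"
    using assms sort_nth_less_iff_count_below[of "k - 1" s a p]
    by (auto simp: breakpt_def not_less)
  show ?thesis
    unfolding strip_def mem_Collect_eq p_def[symmetric] lower upper
    using count_below_le[of s a p] assms by auto
qed

lemma mem_strip_imp_inner_theta_bounds: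
  assumes "\<forall>l\<in>{1..<s}. a l \<in> {-1..1}" "k \<in> {1..s}" "y \<in> strip s phi a k"
  shows "y \<bullet> theta phi \<in> {-1..1}"
proof -
  define p where "p = y \<bullet> theta phi"
  have count: "count_below s a p = k - 1" and "k = 1 \<longrightarrow> -1 < p" "k = s \<longrightarrow> p \<le> 1"
    using assms(3) unfolding mem_strip_iff[OF assms(2)] p_def by blast+
  moreover have "-1 \<le> p" if "k \<noteq> 1"
  proof -
    from that count assms(2) have "card {l \<in> {1..<s}. a l < p} \<noteq> 0"
      by (simp add: count_below_def)
    then have "{l \<in> {1..<s}. a l < p} \<noteq> {}" by (rule contrapos_nn) simp
    then obtain l where "l \<in> {1..<s}" "a l < p" by blast
    with assms(1) have "-1 \<le> a l" "a l < p" by auto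
    then show ?thesis by linarith
  qed
  moreover have "p \<le> 1" if "k \<noteq> s"
  proof -
    have "{l \<in> {1..<s}. a l < p} \<noteq> {1..<s}"
    proof
      assume "{l \<in> {1..<s}. a l < p} = {1..<s}"
      then have "count_below s a p = s - 1" by (simp add: count_below_def)
      with that count assms(2) show False by auto
    qed
    then obtain l where "l \<in> {1..<s}" "\<not> a l < p" by blast
    with assms(1) have "a l \<le> 1" "\<not> a l < p" by auto
    then show ?thesis by linarith
  qed
  ultimately show ?thesis unfolding p_def by (cases "k = 1"; cases "k = s") auto
qed

lemma breakpoint_above_mem_strip:
  assumes "k \<in> {1..s}" "y1 \<in> strip s phi a k" "y2 \<in> strip s phi a k"
    and "l \<in> {1..<s}" "y1 \<bullet> theta phi \<le> a l"
  shows "y2 \<bullet> theta phi \<le> a l"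
proof (rule ccontr)
  assume "\<not> ?thesis"
  then have "count_below s a (y1 \<bullet> theta phi) < count_below s a (y2 \<bullet> theta phi)"
    using assms(4,5) by (intro count_below_strict_mono) auto
  moreover have "count_below s a (y1 \<bullet> theta phi) = count_below s a (y2 \<bullet> theta phi)"
    using assms(2,3) unfolding mem_strip_iff[OF assms(1)] by simp
  ultimately show False by simp
qed

section \<open>The sample space\<close>

abbreviation uniform_pm1 :: "real measure" where
  "uniform_pm1 \<equiv> uniform_measure lborel {-1..1}"

abbreviation uniform_angle :: "real measure" where
  "uniform_angle \<equiv> uniform_measure lborel {0..<2*pi}"

abbreviation breakpoint_measure :: "nat \<Rightarrow> (nat \<Rightarrow> real) measure" where
  "breakpoint_measure s \<equiv> \<Pi>\<^sub>M i\<in>{1..<s}. uniform_pm1"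

lemma prob_space_uniform_pm1: "prob_space uniform_pm1"
  by (rule prob_space_uniform_measure) auto

lemma prob_space_uniform_angle: "prob_space uniform_angle"
  by (rule prob_space_uniform_measure) auto

lemma prob_space_breakpoint_measure: "prob_space (breakpoint_measure s)"
  by (rule prob_space_PiM) (rule prob_space_uniform_pm1)

lemma prob_space_sample_space: "prob_space (sample_space s)"
  unfolding sample_space_def
  by (intro prob_space_pair prob_space_uniform_angle prob_space_breakpoint_measure
      prob_space_uniform_pm1)

lemma emeasure_uniform_measure_le:
  assumes "A \<in> sets M" "S \<in> sets M" "S \<inter> A \<subseteq> B" "B \<in> sets M"
  shows "emeasure (uniform_measure M S) A \<le> emeasure M B / emeasure M S"
  using assms by (simp add: divide_right_mono_ennreal emeasure_mono)

lemma emeasure_pair_measure_le_nn_integral: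
  assumes "sigma_finite_measure M2" "A \<in> sets (M1 \<Otimes>\<^sub>M M2)"
    and "\<And>x. x \<in> space M1 \<Longrightarrow> emeasure M2 (Pair x -` A) \<le> f x"
  shows "emeasure (M1 \<Otimes>\<^sub>M M2) A \<le> (\<integral>\<^sup>+x. f x \<partial>M1)"
  unfolding sigma_finite_measure.emeasure_pair_measure_alt[OF assms(1,2)]
  by (rule nn_integral_mono) (rule assms(3))

lemma emeasure_pair_measure_le_const:
  assumes "prob_space M1" "sigma_finite_measure M2" "A \<in> sets (M1 \<Otimes>\<^sub>M M2)"
    and "\<And>x. x \<in> space M1 \<Longrightarrow> emeasure M2 (Pair x -` A) \<le> c"
  shows "emeasure (M1 \<Otimes>\<^sub>M M2) A \<le> c"
  using emeasure_pair_measure_le_nn_integral[OF assms(2-4)]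
  by (simp add: prob_space.emeasure_space_1[OF assms(1)])

lemma measure_le_if_emeasure_le: "emeasure M A \<le> ennreal r \<Longrightarrow> 0 \<le> r \<Longrightarrow> measure M A \<le> r"
  unfolding measure_def by (rule enn2real_leI)

section \<open>Projections onto a random direction\<close>

lemma sin_ge_half_self:
  fixes y :: real
  assumes "0 \<le> y" "y \<le> pi/2"
  shows "y / 2 \<le> sin y"
proof (cases "y \<le> pi/3")
  case True
  have "(\<lambda>x. sin x - x/2) 0 \<le> (\<lambda>x. sin x - x/2) y"
  proof (rule DERIV_nonneg_imp_increasing_open[OF assms(1)])
    fix x assume x: "0 < x" "x < y"
    have "cos (pi/3) \<le> cos x"
      using x True by (intro cos_monotone_0_pi_le) auto
    then have "cos x - 1/2 \<ge> 0" by (simp add: cos_60)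
    moreover have "DERIV (\<lambda>x. sin x - x/2) x :> cos x - 1/2"
      by (auto intro!: derivative_eq_intros)
    ultimately show "\<exists>d. DERIV (\<lambda>x. sin x - x/2) x :> d \<and> d \<ge> 0" by blast
  qed (auto intro!: continuous_intros)
  then show ?thesis by simp
next
  case False
  have "sin (pi/3) \<le> sin y"
    using False assms by (intro sin_monotone_2pi_le) auto
  moreover have "1.6 \<le> sqrt 3"
    by (rule real_le_rsqrt) (simp add: power2_eq_square)
  moreover have "y/2 \<le> 0.8" using assms pi_approx by simp
  ultimately show ?thesis by (simp add: sin_60)
qed

lemma abs_sin_ge_half_abs:
  fixes y :: real
  assumes "\<bar>y\<bar> \<le> pi/2"
  shows "\<bar>y\<bar> / 2 \<le> \<bar>sin y\<bar>"
  using sin_ge_half_self[of y] sin_ge_half_self[of "-y"] assms by (cases "y \<ge> 0") auto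

lemma inner_theta_eq_norm_cos:
  fixes w :: "real \<times> real"
  obtains \<alpha> where "\<alpha> \<in> {0..<2*pi}" "\<And>phi. w \<bullet> theta phi = norm w * cos (phi - \<alpha>)"
proof (cases "w = 0")
  case True
  then show ?thesis by (intro that[of 0]) auto
next
  case False
  obtain w1 w2 where w: "w = (w1, w2)" by (cases w)
  have r: "norm w > 0" using False by simp
  have "(w1 / norm w)^2 + (w2 / norm w)^2 = 1"
    using False by (auto simp: w norm_Pair power_divide add_divide_distrib[symmetric] zero_prod_def)
  then obtain \<alpha> where "0 \<le> \<alpha>" "\<alpha> < 2*pi" "w1 / norm w = cos \<alpha>" "w2 / norm w = sin \<alpha>"
    by (rule sincos_total_2pi)
  with r show ?thesis
    by (intro that[of \<alpha>]) (auto simp: w theta_def inner_Pair cos_diff field_simps)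
qed

lemma abs_cos_le_imp_near_odd_half_pi:
  fixes y c :: real
  assumes "-2*pi < y" "y < 2*pi" "\<bar>cos y\<bar> \<le> c"
  shows "\<exists>k\<in>{-2..1::int}. \<bar>y - (pi/2 + of_int k * pi)\<bar> \<le> 2 * c"
proof -
  define k where "k = \<lfloor>(y - pi/2) / pi + 1/2\<rfloor>"
  define d where "d = y - (pi/2 + of_int k * pi)"
  have "of_int k \<le> (y - pi/2) / pi + 1/2" "(y - pi/2) / pi + 1/2 < of_int k + 1"
    unfolding k_def by linarith+
  then have "of_int k * pi \<le> y" "y < (of_int k + 1) * pi"
    by (simp_all add: field_simps)
  then have "-(pi/2) \<le> d" "d \<le> pi/2" by (simp_all add: d_def algebra_simps)
  then have "\<bar>d\<bar> \<le> pi/2" by linarith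
  have "cos y = - sin (d + pi * of_int k)"
    by (simp add: d_def sin_diff)
  then have "\<bar>cos y\<bar> = \<bar>sin d\<bar>"
    by (simp add: sin_add abs_mult)
  with abs_sin_ge_half_abs[OF \<open>\<bar>d\<bar> \<le> pi/2\<close>] assms(3) have "\<bar>d\<bar> \<le> 2 * c" by linarith
  moreover have "k \<in> {-2..1}"
  proof -
    have "-5/2 < (y - pi/2) / pi" "(y - pi/2) / pi < 3/2"
      using assms(1,2) by (simp_all add: field_simps)
    then have "-3 < k" "k < 2" unfolding k_def by linarith+
    then show ?thesis by simp
  qed
  ultimately show ?thesis unfolding d_def by blast
qed

lemma emeasure_uniform_angle_small_inner:
  fixes w :: "real \<times> real"
  assumes "w \<noteq> 0" "0 < t"
  shows "emeasure uniform_angle {phi. \<bar>w \<bullet> theta phi\<bar> < t} \<le> ennreal (3 * t / norm w)"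
proof -
  define r where "r = norm w"
  have r: "r > 0" using assms by (simp add: r_def)
  obtain \<alpha> where \<alpha>: "\<alpha> \<in> {0..<2*pi}" "\<And>phi. w \<bullet> theta phi = r * cos (phi - \<alpha>)"
    using inner_theta_eq_norm_cos unfolding r_def by blast
  define I where "I k = cball (\<alpha> + pi/2 + of_int k * pi) (2 * t / r)" for k :: int
  have cover: "{0..<2*pi} \<inter> {phi. \<bar>w \<bullet> theta phi\<bar> < t} \<subseteq> (\<Union>k\<in>{-2..1}. I k)"
  proof
    fix phi assume phi: "phi \<in> {0..<2*pi} \<inter> {phi. \<bar>w \<bullet> theta phi\<bar> < t}"
    then have "\<bar>cos (phi - \<alpha>)\<bar> \<le> t / r"
      using r by (simp add: \<alpha>(2) abs_mult field_simps)
    moreover have "-2*pi < phi - \<alpha>" "phi - \<alpha> < 2*pi" using phi \<alpha>(1) by auto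
    ultimately obtain k where "k \<in> {-2..1}" "\<bar>phi - \<alpha> - (pi/2 + of_int k * pi)\<bar> \<le> 2 * (t / r)"
      using abs_cos_le_imp_near_odd_half_pi by blast
    moreover have "\<bar>phi - \<alpha> - (pi/2 + of_int k * pi)\<bar> = dist (\<alpha> + pi/2 + of_int k * pi) phi"
      by (simp add: dist_real_def abs_minus_commute algebra_simps)
    ultimately show "phi \<in> (\<Union>k\<in>{-2..1}. I k)"
      unfolding I_def by auto
  qed
  have "emeasure lborel (\<Union>k\<in>{-2..1}. I k) \<le> (\<Sum>k\<in>{-2..1}. emeasure lborel (I k))"
    by (rule emeasure_subadditive_finite) (auto simp: I_def)
  also have "\<dots> = 4 * ennreal (4 * t / r)"
    using r assms(2) by (simp add: I_def emeasure_cball)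
  also have "\<dots> = ennreal (16 * t / r)"
    using r assms(2) by (subst ennreal_numeral[symmetric], subst ennreal_mult[symmetric]) auto
  finally have union: "emeasure lborel (\<Union>k\<in>{-2..1}. I k) \<le> ennreal (16 * t / r)" .
  have "emeasure uniform_angle {phi. \<bar>w \<bullet> theta phi\<bar> < t}
      \<le> emeasure lborel (\<Union>k\<in>{-2..1}. I k) / emeasure lborel {0..<2*pi}"
    by (rule emeasure_uniform_measure_le[OF _ _ cover]) (auto simp: I_def theta_def)
  also have "\<dots> \<le> ennreal (16 * t / r) / ennreal (2 * pi)"
    using union by (simp add: divide_right_mono_ennreal)
  also have "\<dots> = ennreal (8 / pi * (t / r))"
    using r assms(2) by (subst divide_ennreal) (auto simp: field_simps)
  also have "\<dots> \<le> ennreal (3 * (t / r))"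
    using pi_approx r assms(2) by (intro ennreal_leI mult_right_mono) (auto simp: field_simps)
  finally show ?thesis by (simp add: r_def)
qed

section \<open>Failure probabilities for a single pair\<close>

definition same_strip :: "nat \<Rightarrow> real \<times> real \<Rightarrow> real \<times> real \<Rightarrow>
    real \<times> (nat \<Rightarrow> real) \<times> real \<Rightarrow> bool" where
  "same_strip s y1 y2 \<omega> \<longleftrightarrow>
     (\<exists>k\<in>{1..s}. y1 \<in> strip s (fst \<omega>) (fst (snd \<omega>)) k \<and> y2 \<in> strip s (fst \<omega>) (fst (snd \<omega>)) k)"

definition same_side :: "real \<times> real \<Rightarrow> real \<times> real \<Rightarrow> real \<times> (nat \<Rightarrow> real) \<times> real \<Rightarrow> bool" where
  "same_side y1 y2 \<omega> \<longleftrightarrow>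
     (y1 \<bullet> theta_perp (fst \<omega>) < snd (snd \<omega>) \<and> y2 \<bullet> theta_perp (fst \<omega>) < snd (snd \<omega>)) \<or>
     (y1 \<bullet> theta_perp (fst \<omega>) > snd (snd \<omega>) \<and> y2 \<bullet> theta_perp (fst \<omega>) > snd (snd \<omega>))"

lemma pred_mem_strip:
  assumes "k \<in> {1..s}"
  shows "Measurable.pred (sample_space s) (\<lambda>\<omega>. y \<in> strip s (fst \<omega>) (fst (snd \<omega>)) k)"
proof -
  have count_eq: "count_below s a p = k - 1 \<longleftrightarrow> (\<Sum>l\<in>{1..<s}. if a l < p then 1 else 0) = real (k - 1)"
    for a p
    by (metis real_count_below of_nat_eq_iff)
  show ?thesis
    unfolding mem_strip_iff[OF assms] count_eq sample_space_def theta_def by measurable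
qed

lemma pred_same_strip[measurable]: "Measurable.pred (sample_space s) (same_strip s y1 y2)"
  unfolding same_strip_def by (intro pred_intros_finite pred_intros_logic pred_mem_strip) auto

lemma pred_same_side[measurable]: "Measurable.pred (sample_space s) (same_side y1 y2)"
  unfolding same_side_def sample_space_def theta_perp_def by measurable

lemma prob_not_same_side_le:
  "measure (sample_space s) {\<omega> \<in> space (sample_space s). \<not> same_side y1 y2 \<omega>} \<le> dist y1 y2 / 2"
proof -
  define B where "B = {\<omega> \<in> space (sample_space s). \<not> same_side y1 y2 \<omega>}"
  have B: "B \<in> sets (uniform_angle \<Otimes>\<^sub>M (breakpoint_measure s \<Otimes>\<^sub>M uniform_pm1))"
    unfolding B_def sample_space_def[symmetric] by measurable
  have section_bound: "emeasure uniform_pm1 (Pair a -` Pair phi -` B) \<le> ennreal (dist y1 y2 / 2)" for phi a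
  proof -
    define u1 u2 where "u1 = y1 \<bullet> theta_perp phi" and "u2 = y2 \<bullet> theta_perp phi"
    have "\<bar>u1 - u2\<bar> \<le> norm (y1 - y2) * norm (theta_perp phi)"
      unfolding u1_def u2_def inner_diff_left[symmetric] by (rule Cauchy_Schwarz_ineq2)
    then have close: "\<bar>u1 - u2\<bar> \<le> dist y1 y2"
      by (simp add: theta_perp_def norm_Pair dist_norm)
    have "{-1..1} \<inter> Pair a -` Pair phi -` B \<subseteq> {min u1 u2 .. max u1 u2}"
      by (auto simp: B_def same_side_def u1_def u2_def)
    then have "emeasure uniform_pm1 (Pair a -` Pair phi -` B)
        \<le> emeasure lborel {min u1 u2 .. max u1 u2} / emeasure lborel {-1..1::real}"
      using sets_Pair1[OF sets_Pair1[OF B]] by (intro emeasure_uniform_measure_le) auto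
    also have "\<dots> = ennreal ((max u1 u2 - min u1 u2) / 2)"
      by (subst divide_ennreal[symmetric]) auto
    also have "\<dots> \<le> ennreal (dist y1 y2 / 2)"
      using close by (intro ennreal_leI) auto
    finally show ?thesis .
  qed
  have "emeasure (sample_space s) B \<le> ennreal (dist y1 y2 / 2)"
    unfolding sample_space_def
  proof (rule emeasure_pair_measure_le_const[OF prob_space_uniform_angle _ B])
    show "sigma_finite_measure (breakpoint_measure s \<Otimes>\<^sub>M uniform_pm1)"
      by (intro prob_space_imp_sigma_finite prob_space_pair prob_space_breakpoint_measure
          prob_space_uniform_pm1)
    fix phi
    show "emeasure (breakpoint_measure s \<Otimes>\<^sub>M uniform_pm1) (Pair phi -` B) \<le> ennreal (dist y1 y2 / 2)"
      by (rule emeasure_pair_measure_le_const[OF prob_space_breakpoint_measure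
            prob_space_imp_sigma_finite[OF prob_space_uniform_pm1] sets_Pair1[OF B] section_bound])
  qed
  then show ?thesis
    unfolding B_def by (rule measure_le_if_emeasure_le) simp
qed

lemma same_strip_imp_no_breakpoint_between:
  assumes "\<forall>l\<in>{1..<s}. a l \<in> {-1..1}" "same_strip s y1 y2 (phi, a, z)"
  defines "lo \<equiv> min (y1 \<bullet> theta phi) (y2 \<bullet> theta phi)"
    and "hi \<equiv> max (y1 \<bullet> theta phi) (y2 \<bullet> theta phi)"
  shows "-1 \<le> lo" "hi \<le> 1" "\<forall>l\<in>{1..<s}. a l \<notin> {lo..<hi}"
proof -
  obtain k where k: "k \<in> {1..s}" "y1 \<in> strip s phi a k" "y2 \<in> strip s phi a k"
    using assms(2) by (auto simp: same_strip_def)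
  show "-1 \<le> lo" "hi \<le> 1"
    using mem_strip_imp_inner_theta_bounds[OF assms(1) k(1)] k(2,3) by (auto simp: lo_def hi_def)
  show "\<forall>l\<in>{1..<s}. a l \<notin> {lo..<hi}"
  proof (intro ballI notI)
    fix l assume l: "l \<in> {1..<s}" "a l \<in> {lo..<hi}"
    show False
      using breakpoint_above_mem_strip[OF k(1,2,3) l(1)]
        breakpoint_above_mem_strip[OF k(1,3,2) l(1)] l(2)
      by (cases "y1 \<bullet> theta phi \<le> y2 \<bullet> theta phi") (auto simp: lo_def hi_def)
  qed
qed

lemma AE_breakpoints_in_range: "AE a in breakpoint_measure s. \<forall>l\<in>{1..<s}. a l \<in> {-1..1}"
  by (intro AE_finite_allI AE_PiM_component AE_uniform_measureI) (auto intro: prob_space_uniform_pm1)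

lemma emeasure_uniform_pm1_outside_interval:
  assumes "-1 \<le> lo" "lo \<le> hi" "hi \<le> 1"
  shows "emeasure uniform_pm1 ({-1..1} - {lo..<hi}) = ennreal (1 - (hi - lo) / 2)"
proof -
  have "emeasure lborel ({-1..1} - {lo..<hi}) = emeasure lborel {-1..1::real} - emeasure lborel {lo..<hi}"
    using assms by (intro emeasure_Diff) auto
  also have "\<dots> = ennreal (2 - (hi - lo))"
    using assms by (simp add: ennreal_minus[symmetric])
  also have "\<dots> / ennreal 2 = ennreal (1 - (hi - lo) / 2)"
    using assms by (subst divide_ennreal) (auto simp: diff_divide_distrib)
  finally show ?thesis
    using assms by (simp add: Int_absorb1)
qed

lemma emeasure_breakpoints_all_in_le:
  assumes "X \<in> sets borel" "emeasure uniform_pm1 X \<le> ennreal q" "0 \<le> q"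
  shows "emeasure (breakpoint_measure s) {a \<in> space (breakpoint_measure s). \<forall>l\<in>{1..<s}. a l \<in> X}
           \<le> ennreal (q ^ (s - 1))"
proof -
  interpret product_prob_space "\<lambda>_. uniform_pm1" "{1..<s}"
    by (intro product_prob_spaceI prob_space_uniform_pm1)
  have "emeasure (breakpoint_measure s) {a \<in> space (breakpoint_measure s). \<forall>l\<in>{1..<s}. a l \<in> X}
      = (\<Prod>l\<in>{1..<s}. emeasure uniform_pm1 X)"
    using assms(1) by (intro emeasure_PiM_Collect) auto
  also have "\<dots> \<le> (\<Prod>l\<in>{1..<s}. ennreal q)"
    by (rule prod_mono_ennreal) (rule assms(2))
  finally show ?thesis
    using assms(3) by (simp add: ennreal_power)
qed

lemma emeasure_same_strip_section_le:
  assumes "t \<le> \<bar>(y1 - y2) \<bullet> theta phi\<bar>" "t \<le> 2"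
  shows "emeasure (breakpoint_measure s \<Otimes>\<^sub>M uniform_pm1)
           (Pair phi -` {\<omega> \<in> space (sample_space s). same_strip s y1 y2 \<omega>})
         \<le> ennreal ((1 - t/2) ^ (s - 1))"
proof -
  define lo hi where "lo = min (y1 \<bullet> theta phi) (y2 \<bullet> theta phi)"
    and "hi = max (y1 \<bullet> theta phi) (y2 \<bullet> theta phi)"
  have gap: "t \<le> hi - lo"
    using assms(1) by (auto simp: lo_def hi_def inner_diff_left)
  \<comment> \<open>If a projection leaves \<open>[-1, 1]\<close>, the points share no strip for almost every \<open>a\<close>.\<close>
  define X where "X = (if -1 \<le> lo \<and> hi \<le> 1 then {-1..1} - {lo..<hi} else {})"
  define S where "S = {a \<in> space (breakpoint_measure s). same_strip s y1 y2 (phi, a, 0)}"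
  define T where "T = {a \<in> space (breakpoint_measure s). \<forall>l\<in>{1..<s}. a l \<in> X}"
  have section_eq: "Pair phi -` {\<omega> \<in> space (sample_space s). same_strip s y1 y2 \<omega>} = S \<times> space uniform_pm1"
    by (auto simp: S_def sample_space_def space_pair_measure same_strip_def)
  have "(\<lambda>a. (phi, a, 0)) \<in> breakpoint_measure s \<rightarrow>\<^sub>M sample_space s"
    unfolding sample_space_def by measurable
  then have S: "S \<in> sets (breakpoint_measure s)"
    unfolding S_def by (intro predE measurable_compose[OF _ pred_same_strip])
  have X: "emeasure uniform_pm1 X \<le> ennreal (1 - t/2)"
    using emeasure_uniform_pm1_outside_interval[of lo hi] gap by (auto simp: X_def lo_def hi_def)
  have in_T: "a \<in> T" if "\<forall>l\<in>{1..<s}. a l \<in> {-1..1}" "a \<in> S" for a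
  proof -
    from that(2) have a: "a \<in> space (breakpoint_measure s)" "same_strip s y1 y2 (phi, a, 0)"
      by (auto simp: S_def)
    from same_strip_imp_no_breakpoint_between[OF that(1) a(2)] that(1) a(1) show ?thesis
      by (auto simp: T_def X_def lo_def hi_def)
  qed
  have "AE a in breakpoint_measure s. a \<in> S \<longrightarrow> a \<in> T"
    using AE_breakpoints_in_range by (rule AE_mp) (auto intro!: AE_I2 in_T)
  then have "emeasure (breakpoint_measure s) S \<le> emeasure (breakpoint_measure s) T"
    by (rule emeasure_mono_AE) (simp add: T_def X_def)
  also have "\<dots> \<le> ennreal ((1 - t/2) ^ (s - 1))"
    unfolding T_def using X assms(2) by (intro emeasure_breakpoints_all_in_le) (auto simp: X_def)
  finally have "emeasure (breakpoint_measure s) S \<le> ennreal ((1 - t/2) ^ (s - 1))" .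
  moreover have "emeasure (breakpoint_measure s \<Otimes>\<^sub>M uniform_pm1) (S \<times> space uniform_pm1)
      = emeasure (breakpoint_measure s) S"
    using S by (simp add: prob_space_uniform_pm1 prob_space.emeasure_space_1
        sigma_finite_measure.emeasure_pair_measure_Times prob_space_imp_sigma_finite)
  ultimately show ?thesis
    unfolding section_eq by simp
qed

lemma prob_same_strip_le:
  assumes "y1 \<noteq> y2" "0 < t" "t \<le> 2"
  shows "measure (sample_space s) {\<omega> \<in> space (sample_space s). same_strip s y1 y2 \<omega>}
           \<le> 3 * t / dist y1 y2 + (1 - t/2) ^ (s - 1)"
proof -
  define B where "B = {\<omega> \<in> space (sample_space s). same_strip s y1 y2 \<omega>}"
  define E where "E = {phi. \<bar>(y1 - y2) \<bullet> theta phi\<bar> < t}"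
  define c where "c = (1 - t/2) ^ (s - 1)"
  have c: "0 \<le> c" using assms(3) by (simp add: c_def)
  have E: "E \<in> sets borel" unfolding E_def theta_def by measurable
  have B: "B \<in> sets (uniform_angle \<Otimes>\<^sub>M (breakpoint_measure s \<Otimes>\<^sub>M uniform_pm1))"
    unfolding B_def sample_space_def[symmetric] by measurable
  have "emeasure (sample_space s) B \<le> (\<integral>\<^sup>+phi. (indicator E phi + ennreal c) \<partial>uniform_angle)"
    unfolding sample_space_def
  proof (rule emeasure_pair_measure_le_nn_integral[OF _ B])
    show "sigma_finite_measure (breakpoint_measure s \<Otimes>\<^sub>M uniform_pm1)"
      by (intro prob_space_imp_sigma_finite prob_space_pair prob_space_breakpoint_measure
          prob_space_uniform_pm1)
    fix phi
    show "emeasure (breakpoint_measure s \<Otimes>\<^sub>M uniform_pm1) (Pair phi -` B) \<le> indicator E phi + ennreal c"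
    proof (cases "phi \<in> E")
      case True
      have "emeasure (breakpoint_measure s \<Otimes>\<^sub>M uniform_pm1) (Pair phi -` B) \<le> 1"
        by (intro prob_space.emeasure_le_1 prob_space_pair prob_space_breakpoint_measure
            prob_space_uniform_pm1)
      with True show ?thesis by (simp add: add_increasing2)
    next
      case False
      then have "emeasure (breakpoint_measure s \<Otimes>\<^sub>M uniform_pm1) (Pair phi -` B) \<le> ennreal c"
        unfolding B_def c_def E_def using assms(3)
        by (intro emeasure_same_strip_section_le) auto
      then show ?thesis by (simp add: add_increasing)
    qed
  qed
  also have "\<dots> = emeasure uniform_angle E + ennreal c"
    using E prob_space.emeasure_space_1[OF prob_space_uniform_angle]
    by (subst nn_integral_add) (auto simp: nn_integral_indicator)
  also have "\<dots> \<le> ennreal (3 * t / dist y1 y2) + ennreal c"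
    using emeasure_uniform_angle_small_inner[of "y1 - y2" t] assms(1,2)
    by (intro add_right_mono) (simp add: E_def dist_norm)
  finally have "emeasure (sample_space s) B \<le> ennreal (3 * t / dist y1 y2 + c)"
    using assms(2) c by (simp add: ennreal_plus)
  then show ?thesis
    unfolding B_def c_def[symmetric] by (rule measure_le_if_emeasure_le) (use assms(2) c in simp)
qed

lemma one_minus_half_power_le:
  fixes t :: real
  assumes "0 < t" "t \<le> 2" "2 \<le> s"
  shows "(1 - t/2) ^ (s - 1) \<le> 4 / (real s * t)"
proof -
  define x where "x = real (s - 1) * t / 2"
  have x: "real s * t / 4 \<le> x" "0 \<le> x"
    using assms by (simp_all add: x_def of_nat_diff field_simps)
  have "x \<le> exp x"
    using exp_ge_add_one_self[of x] by linarith
  have "(1 - t/2) ^ (s - 1) \<le> exp (-t/2) ^ (s - 1)"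
    using assms(2) exp_ge_add_one_self[of "-t/2"] by (intro power_mono) auto
  also have "\<dots> = inverse (exp x)"
    by (simp add: x_def exp_of_nat_mult[symmetric] exp_minus[symmetric] algebra_simps)
  also have "\<dots> \<le> inverse (real s * t / 4)"
    using x \<open>x \<le> exp x\<close> assms by (intro le_imp_inverse_le) auto
  finally show ?thesis by (simp add: field_simps)
qed

lemma prob_same_strip_far_le:
  assumes "2 \<le> s" "real s powr (-1/3) < dist y1 y2"
  shows "measure (sample_space s) {\<omega> \<in> space (sample_space s). same_strip s y1 y2 \<omega>}
           \<le> 7 * real s powr (-1/3)"
proof -
  define \<delta> where "\<delta> = real s powr (-1/3)"
  have \<delta>: "0 < \<delta>" "\<delta> < dist y1 y2" using assms by (simp_all add: \<delta>_def)
  have "\<delta>\<^sup>2 = real s powr (-2/3)"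
    by (simp add: \<delta>_def power2_eq_square flip: powr_add)
  then have "real s * \<delta>\<^sup>2 = real s powr (1/3)"
    using assms by (simp add: powr_mult_base)
  also have "\<dots> = 1 / \<delta>"
    using assms by (simp add: \<delta>_def field_simps flip: powr_add)
  finally have s_\<delta>: "real s * \<delta>\<^sup>2 = 1 / \<delta>" .
  have "\<delta> \<le> 1"
    using assms powr_mono[of "-1/3" 0 "real s"] by (simp add: \<delta>_def)
  then have "\<delta>\<^sup>2 \<le> 1"
    using \<delta> by (simp add: power_le_one)
  have "measure (sample_space s) {\<omega> \<in> space (sample_space s). same_strip s y1 y2 \<omega>}
      \<le> 3 * \<delta>\<^sup>2 / dist y1 y2 + (1 - \<delta>\<^sup>2/2) ^ (s - 1)"
    using \<delta> \<open>\<delta>\<^sup>2 \<le> 1\<close> by (intro prob_same_strip_le) auto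
  also have "\<dots> \<le> 3 * \<delta> + 4 * \<delta>"
  proof (rule add_mono)
    have "3 * \<delta>\<^sup>2 / dist y1 y2 \<le> 3 * \<delta>\<^sup>2 / \<delta>"
      using \<delta> by (intro divide_left_mono mult_pos_pos) auto
    then show "3 * \<delta>\<^sup>2 / dist y1 y2 \<le> 3 * \<delta>"
      using \<delta> by (simp add: power2_eq_square)
    show "(1 - \<delta>\<^sup>2/2) ^ (s - 1) \<le> 4 * \<delta>"
      using one_minus_half_power_le[of "\<delta>\<^sup>2" s] s_\<delta> \<open>\<delta>\<^sup>2 \<le> 1\<close> \<delta> assms(1)
      by simp
  qed
  finally show ?thesis
    by (simp add: \<delta>_def)
qed

section \<open>Union bound over all pairs\<close>

definition bad_pair :: "nat \<Rightarrow> real \<Rightarrow> real \<times> real \<Rightarrow> real \<times> real \<Rightarrow>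
    real \<times> (nat \<Rightarrow> real) \<times> real \<Rightarrow> bool" where
  "bad_pair s \<delta> y1 y2 \<omega> \<longleftrightarrow>
     (if \<delta> < dist y1 y2 then same_strip s y1 y2 \<omega> else \<not> same_side y1 y2 \<omega>)"

lemma pred_bad_pair: "Measurable.pred (sample_space s) (bad_pair s \<delta> y1 y2)"
  unfolding bad_pair_def by measurable

lemma good_event_iff_no_bad_pair:
  "good_event s m x \<delta> \<omega> \<longleftrightarrow> (\<forall>i\<in>{1..m}. \<forall>j\<in>{1..m}. i \<noteq> j \<longrightarrow> \<not> bad_pair s \<delta> (x i) (x j) \<omega>)"
proof -
  obtain phi a z where \<omega>: "\<omega> = (phi, a, z)" by (cases \<omega>)
  have not_bad: "\<not> bad_pair s \<delta> y1 y2 \<omega> \<longleftrightarrow>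
      (\<delta> < dist y1 y2 \<longrightarrow> \<not> same_strip s y1 y2 \<omega>) \<and> (dist y1 y2 \<le> \<delta> \<longrightarrow> same_side y1 y2 \<omega>)"
    for y1 y2 by (auto simp: bad_pair_def)
  show ?thesis
    unfolding not_bad imp_conjR ball_conj_distrib
    by (simp add: \<omega> good_event_def same_strip_def same_side_def)
qed

lemma prob_bad_pair_le:
  assumes "2 \<le> s"
  shows "measure (sample_space s)
           {\<omega> \<in> space (sample_space s). bad_pair s (real s powr (-1/3)) y1 y2 \<omega>}
         \<le> 7 * real s powr (-1/3)"
proof (cases "real s powr (-1/3) < dist y1 y2")
  case True
  then show ?thesis
    using prob_same_strip_far_le[OF assms] by (simp add: bad_pair_def)
next
  case False
  then have "measure (sample_space s)
      {\<omega> \<in> space (sample_space s). bad_pair s (real s powr (-1/3)) y1 y2 \<omega>} \<le> dist y1 y2 / 2"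
    using prob_not_same_side_le[of s y1 y2] by (simp add: bad_pair_def)
  moreover have "0 < real s powr (-1/3)"
    using assms by simp
  ultimately show ?thesis
    using False by linarith
qed

lemma (in prob_space) prob_compl_UN_ge:
  assumes "finite I" "\<And>i. i \<in> I \<Longrightarrow> A i \<in> events" "\<And>i. i \<in> I \<Longrightarrow> prob (A i) \<le> e"
  shows "1 - real (card I) * e \<le> prob (space M - (\<Union>i\<in>I. A i))"
proof -
  have "prob (\<Union>i\<in>I. A i) \<le> (\<Sum>i\<in>I. prob (A i))"
    using assms(1,2) by (intro finite_measure_subadditive_finite) auto
  also have "\<dots> \<le> real (card I) * e"
    using sum_mono[of I "\<lambda>i. prob (A i)" "\<lambda>_. e"] assms(3) by simp
  finally show ?thesis
    using assms(1,2) by (subst prob_compl) (auto intro!: sets.finite_UN)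
qed

lemma prob_good_event_ge:
  assumes "2 \<le> s"
  shows "1 - 7 * (real m * real m) * real s powr (-1/3)
           \<le> measure (sample_space s)
                {\<omega> \<in> space (sample_space s). good_event s m x (real s powr (-1/3)) \<omega>}"
proof -
  interpret prob_space "sample_space s" by (rule prob_space_sample_space)
  define \<delta> where "\<delta> = real s powr (-1/3)"
  define P where "P = {p \<in> {1..m} \<times> {1..m}. fst p \<noteq> snd p}"
  define A where "A p = {\<omega> \<in> space (sample_space s). bad_pair s \<delta> (x (fst p)) (x (snd p)) \<omega>}" for p
  have "card P \<le> m * m"
    using card_mono[of "{1..m} \<times> {1..m}" P] by (auto simp: P_def)
  then have "real (card P) \<le> real m * real m"
    by (metis of_nat_le_iff of_nat_mult)
  then have "1 - real m * real m * (7 * \<delta>) \<le> 1 - real (card P) * (7 * \<delta>)"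
    by (intro diff_left_mono mult_right_mono) (auto simp: \<delta>_def)
  also have "\<dots> \<le> prob (space (sample_space s) - (\<Union>p\<in>P. A p))"
    using prob_bad_pair_le[OF assms] unfolding A_def \<delta>_def
    by (intro prob_compl_UN_ge) (auto simp: P_def intro: predE pred_bad_pair)
  also have "space (sample_space s) - (\<Union>p\<in>P. A p)
      = {\<omega> \<in> space (sample_space s). good_event s m x \<delta> \<omega>}"
    by (auto simp: good_event_iff_no_bad_pair P_def A_def)
  finally show ?thesis
    by (simp add: \<delta>_def algebra_simps)
qed

lemma sq_mult_powr_neg_third_le:
  fixes s m :: real
  assumes "1 \<le> s" "0 \<le> m" "m \<le> s powr (1/10)"
  shows "m * m * s powr (-1/3) \<le> s powr (-1/10)"
proof -
  have "m * m * s powr (-1/3) \<le> s powr (1/10) * s powr (1/10) * s powr (-1/3)"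
    using assms by (intro mult_right_mono mult_mono) auto
  also have "\<dots> = s powr (-2/15)"
    using assms by (simp flip: powr_add)
  also have "\<dots> \<le> s powr (-1/10)"
    using assms by (intro powr_mono) auto
  finally show ?thesis .
qed

theorem lemma5p3:
  "\<exists>C::real. \<forall>(s::nat) (m::nat) (x::nat \<Rightarrow> real \<times> real).
     s \<ge> 2 \<longrightarrow> real m \<le> real s powr (1/10) \<longrightarrow>
     measure (sample_space s)
       {\<omega> \<in> space (sample_space s). good_event s m x (real s powr (-1/3)) \<omega>}
       \<ge> 1 - C * real s powr (-1/10)"
proof (intro exI[of _ 7] allI impI)
  fix s m :: nat and x :: "nat \<Rightarrow> real \<times> real"
  assume s: "s \<ge> 2" and m: "real m \<le> real s powr (1/10)"
  have "real m * real m * real s powr (-1/3) \<le> real s powr (-1/10)"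
    using s m by (intro sq_mult_powr_neg_third_le) auto
  then show "1 - 7 * real s powr (-1/10) \<le> measure (sample_space s)
      {\<omega> \<in> space (sample_space s). good_event s m x (real s powr (-1/3)) \<omega>}"
    using prob_good_event_ge[OF s, of m x] by linarith
qed

end
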